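(* In the two-source game ($m=2$) with $n_1\ge n_2$ and $n=n_1+n_2$, if $n_1\bar q<q\mu/\phi+n_2+\bar q$ and $q>\frac{2}{n}$, then the unique (pure) Nash equilibrium is the profile in which all users choose the direct path, i.e., $u_1=n_1$, $u_2=n_2$.
   Context: Two-source network: sources $s_1,s_2$ and destination $d$; source $s_i$ has a set $N_i$ of $n_i$ users. Each user generates an independent Poisson flow of packets of rate $\phi>0$; each direct link $(s_i,d)$ has service rate $\mu>0$; the sidelink between $s_1$ and $s_2$ loses packets independently with probability $q\in[0,1]$, and $\bar q=1-q$. Only pure strategies: a user of $N_1$ chooses DP $(s_1,d)$ or IP $(s_1,s_2,d)$; a user of $N_2$ chooses DP $(s_2,d)$ or IP $(s_2,s_1,d)$. With $u_i$ users of $N_i$ on DP, $T_1=u_1\phi+(n_2-u_2)\bar q\phi$, $T_2=u_2\phi+(n_1-u_1)\bar q\phi$. The loss rate of a user of $N_i$ is $\phi\frac{T_i}{T_i+\mu}$ on DP and $\phi\left(q+\bar q\frac{T_j}{T_j+\mu}\right)$ on IP to $s_j$. A Nash equilibrium is a pure profile in which no user can strictly decrease its loss rate by unilaterally switching its route. *)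

theory Defs
  imports Complex_Main
begin

text \<open>Users of N_1 are indexed by i < n1, users of N_2 by i < n2.
  A pure profile is a pair (d1, d2) of boolean functions; d1 i = True means
  user i of N_1 uses its direct path (s_1,d), False means the indirect path
  (s_1,s_2,d); similarly for d2. Values outside the index ranges are irrelevant.\<close>

definition num_dp :: "nat \<Rightarrow> (nat \<Rightarrow> bool) \<Rightarrow> nat" where
  "num_dp n d = card {i. i < n \<and> d i}"

definition traffic1 :: "nat \<Rightarrow> nat \<Rightarrow> real \<Rightarrow> real \<Rightarrow> (nat \<Rightarrow> bool) \<Rightarrow> (nat \<Rightarrow> bool) \<Rightarrow> real" where
  "traffic1 n1 n2 \<phi> q d1 d2 =
     real (num_dp n1 d1) * \<phi> + real (n2 - num_dp n2 d2) * (1 - q) * \<phi>"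

definition traffic2 :: "nat \<Rightarrow> nat \<Rightarrow> real \<Rightarrow> real \<Rightarrow> (nat \<Rightarrow> bool) \<Rightarrow> (nat \<Rightarrow> bool) \<Rightarrow> real" where
  "traffic2 n1 n2 \<phi> q d1 d2 =
     real (num_dp n2 d2) * \<phi> + real (n1 - num_dp n1 d1) * (1 - q) * \<phi>"

definition loss1 :: "nat \<Rightarrow> nat \<Rightarrow> real \<Rightarrow> real \<Rightarrow> real \<Rightarrow> (nat \<Rightarrow> bool) \<Rightarrow> (nat \<Rightarrow> bool) \<Rightarrow> nat \<Rightarrow> real" where
  "loss1 n1 n2 \<phi> \<mu> q d1 d2 i =
     (let T1 = traffic1 n1 n2 \<phi> q d1 d2; T2 = traffic2 n1 n2 \<phi> q d1 d2 in
      if d1 i then \<phi> * (T1 / (T1 + \<mu>))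
      else \<phi> * (q + (1 - q) * (T2 / (T2 + \<mu>))))"

definition loss2 :: "nat \<Rightarrow> nat \<Rightarrow> real \<Rightarrow> real \<Rightarrow> real \<Rightarrow> (nat \<Rightarrow> bool) \<Rightarrow> (nat \<Rightarrow> bool) \<Rightarrow> nat \<Rightarrow> real" where
  "loss2 n1 n2 \<phi> \<mu> q d1 d2 i =
     (let T1 = traffic1 n1 n2 \<phi> q d1 d2; T2 = traffic2 n1 n2 \<phi> q d1 d2 in
      if d2 i then \<phi> * (T2 / (T2 + \<mu>))
      else \<phi> * (q + (1 - q) * (T1 / (T1 + \<mu>))))"

definition nash_eq :: "nat \<Rightarrow> nat \<Rightarrow> real \<Rightarrow> real \<Rightarrow> real \<Rightarrow> (nat \<Rightarrow> bool) \<Rightarrow> (nat \<Rightarrow> bool) \<Rightarrow> bool" where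
  "nash_eq n1 n2 \<phi> \<mu> q d1 d2 \<longleftrightarrow>
     (\<forall>i < n1. \<forall>b. \<not> (loss1 n1 n2 \<phi> \<mu> q (d1(i := b)) d2 i < loss1 n1 n2 \<phi> \<mu> q d1 d2 i)) \<and>
     (\<forall>i < n2. \<forall>b. \<not> (loss2 n1 n2 \<phi> \<mu> q d1 (d2(i := b)) i < loss2 n1 n2 \<phi> \<mu> q d1 d2 i))"

end

theory Submission
  imports Defs
begin

text \<open>Writing the loss rates as \<open>\<phi> - \<phi>\<mu>/(T + \<mu>)\<close> on the direct path and
  \<open>\<phi> - \<phi>(1 - q)\<mu>/(T' + \<mu>)\<close> on the indirect one, a user prefers its direct path
  exactly when \<open>(1 - q)(T + \<mu>) \<le> T' + \<mu>\<close>. At the all-direct profile this is the first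
  hypothesis for the users of \<open>s\<^sub>1\<close>, and follows from \<open>n\<^sub>2 \<le> n\<^sub>1\<close> for those of
  \<open>s\<^sub>2\<close>. Conversely, suppose some user is on an indirect path at an equilibrium. If both
  sources have such users, adding their two conditions gives
  \<open>q(T\<^sub>1 + T\<^sub>2 + 2\<mu>) \<le> 2(1 - q)\<phi>\<close>, impossible since \<open>T\<^sub>1 + T\<^sub>2 \<ge> (1 - q)n\<phi>\<close> and
  \<open>qn > 2\<close>. If only one source has them, the condition of one of its indirect users
  contradicts the same inequality that made the all-direct profile an equilibrium.
  Swapping the two sources is a symmetry of the game, so everything is proved for the
  users of \<open>s\<^sub>1\<close> only.\<close>

lemma indirect_minus_direct_loss:
  fixes \<phi> \<mu> q a b :: real
  assumes "a + \<mu> \<noteq> 0" and "b + \<mu> \<noteq> 0"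
  shows "\<phi> * (q + (1 - q) * (b / (b + \<mu>))) - \<phi> * (a / (a + \<mu>))
       = \<phi> * \<mu> / ((a + \<mu>) * (b + \<mu>)) * ((b + \<mu>) - (1 - q) * (a + \<mu>))"
  using assms by (simp add: field_simps)

lemma
  fixes \<phi> \<mu> q a b :: real
  assumes "\<phi> > 0" and "\<mu> > 0" and "a \<ge> 0" and "b \<ge> 0"
  shows direct_loss_le_indirect_iff:
      "\<phi> * (a / (a + \<mu>)) \<le> \<phi> * (q + (1 - q) * (b / (b + \<mu>)))
       \<longleftrightarrow> (1 - q) * (a + \<mu>) \<le> b + \<mu>" (is "?D \<le> ?I \<longleftrightarrow> _")
    and indirect_loss_le_direct_iff:
      "\<phi> * (q + (1 - q) * (b / (b + \<mu>))) \<le> \<phi> * (a / (a + \<mu>))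
       \<longleftrightarrow> b + \<mu> \<le> (1 - q) * (a + \<mu>)"
proof -
  define c where "c = \<phi> * \<mu> / ((a + \<mu>) * (b + \<mu>))"
  define e where "e = (b + \<mu>) - (1 - q) * (a + \<mu>)"
  have "c > 0" unfolding c_def using assms by (intro divide_pos_pos mult_pos_pos) auto
  have diff: "?I - ?D = c * e"
    unfolding c_def e_def using assms by (intro indirect_minus_direct_loss) auto
  have "?D \<le> ?I \<longleftrightarrow> 0 \<le> ?I - ?D" by (rule diff_ge_0_iff_ge[symmetric])
  also have "\<dots> \<longleftrightarrow> 0 \<le> c * e" by (simp only: diff)
  also have "\<dots> \<longleftrightarrow> 0 \<le> e" using mult_le_cancel_left_pos[OF \<open>c > 0\<close>, of 0 e] by simp
  finally show "?D \<le> ?I \<longleftrightarrow> (1 - q) * (a + \<mu>) \<le> b + \<mu>" by (simp add: e_def)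
  have "?I \<le> ?D \<longleftrightarrow> ?I - ?D \<le> 0" by (rule diff_le_0_iff_le[symmetric])
  also have "\<dots> \<longleftrightarrow> c * e \<le> 0" by (simp only: diff)
  also have "\<dots> \<longleftrightarrow> e \<le> 0" using mult_le_cancel_left_pos[OF \<open>c > 0\<close>, of e 0] by simp
  finally show "?I \<le> ?D \<longleftrightarrow> b + \<mu> \<le> (1 - q) * (a + \<mu>)" by (simp add: e_def)
qed

lemma num_dp_le: "num_dp n d \<le> n"
proof -
  have "{i. i < n \<and> d i} \<subseteq> {..<n}" by auto
  then show ?thesis unfolding num_dp_def by (metis card_lessThan card_mono finite_lessThan)
qed

lemma num_dp_const_True: "num_dp n (\<lambda>_. True) = n"
  unfolding num_dp_def by simp

lemma num_dp_eq_iff: "num_dp n d = n \<longleftrightarrow> (\<forall>i<n. d i)"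
proof
  have sub: "{i. i < n \<and> d i} \<subseteq> {..<n}" by auto
  assume "num_dp n d = n"
  then have "{i. i < n \<and> d i} = {..<n}"
    using card_subset_eq[OF finite_lessThan sub] by (simp add: num_dp_def)
  then show "\<forall>i<n. d i" by auto
next
  assume "\<forall>i<n. d i"
  then have "{i. i < n \<and> d i} = {..<n}" by auto
  then show "num_dp n d = n" by (simp add: num_dp_def)
qed

lemma num_dp_fun_upd_True:
  assumes "i < n"
  shows "num_dp n (d(i := True)) = Suc (num_dp n (d(i := False)))"
proof -
  have "{j. j < n \<and> (d(i := True)) j} = insert i {j. j < n \<and> (d(i := False)) j}"
    using assms by auto
  then show ?thesis unfolding num_dp_def by simp
qed

lemma traffic2_eq_traffic1_swap: "traffic2 n1 n2 \<phi> q d1 d2 = traffic1 n2 n1 \<phi> q d2 d1"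
  unfolding traffic1_def traffic2_def ..

lemma loss2_eq_loss1_swap: "loss2 n1 n2 \<phi> \<mu> q d1 d2 = loss1 n2 n1 \<phi> \<mu> q d2 d1"
  unfolding loss1_def loss2_def Let_def traffic2_eq_traffic1_swap[of n1] traffic2_eq_traffic1_swap[of n2] ..

lemma traffic1_fun_upd_True:
  assumes "i < n1"
  shows "traffic1 n1 n2 \<phi> q (d1(i := True)) d2 = traffic1 n1 n2 \<phi> q (d1(i := False)) d2 + \<phi>"
  unfolding traffic1_def num_dp_fun_upd_True[OF assms] by (simp add: algebra_simps)

lemma traffic2_fun_upd_False:
  assumes "i < n1"
  shows "traffic2 n1 n2 \<phi> q (d1(i := False)) d2 = traffic2 n1 n2 \<phi> q (d1(i := True)) d2 + (1 - q) * \<phi>"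
  using num_dp_le[of n1 "d1(i := True)"]
  unfolding traffic2_def num_dp_fun_upd_True[OF assms] by (simp add: of_nat_diff algebra_simps)

lemma traffic_nonneg:
  assumes "\<phi> > 0" and "q \<le> 1"
  shows "traffic1 n1 n2 \<phi> q d1 d2 \<ge> 0" and "traffic2 n1 n2 \<phi> q d1 d2 \<ge> 0"
  using assms unfolding traffic1_def traffic2_def by simp_all

lemma traffic1_plus_traffic2:
  "traffic1 n1 n2 \<phi> q d1 d2 + traffic2 n1 n2 \<phi> q d1 d2
     = (1 - q) * real (n1 + n2) * \<phi> + q * real (num_dp n1 d1 + num_dp n2 d2) * \<phi>"
  using num_dp_le[of n1 d1] num_dp_le[of n2 d2]
  unfolding traffic1_def traffic2_def by (simp add: of_nat_diff algebra_simps)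

definition source1_stable :: "nat \<Rightarrow> nat \<Rightarrow> real \<Rightarrow> real \<Rightarrow> real \<Rightarrow> (nat \<Rightarrow> bool) \<Rightarrow> (nat \<Rightarrow> bool) \<Rightarrow> bool" where
  "source1_stable n1 n2 \<phi> \<mu> q d1 d2 \<longleftrightarrow>
     (\<forall>i < n1. \<forall>b. \<not> loss1 n1 n2 \<phi> \<mu> q (d1(i := b)) d2 i < loss1 n1 n2 \<phi> \<mu> q d1 d2 i)"

lemma nash_eq_iff_source1_stable:
  "nash_eq n1 n2 \<phi> \<mu> q d1 d2 \<longleftrightarrow> source1_stable n1 n2 \<phi> \<mu> q d1 d2 \<and> source1_stable n2 n1 \<phi> \<mu> q d2 d1"
  unfolding nash_eq_def source1_stable_def loss2_eq_loss1_swap ..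

lemma source1_stable_all_direct:
  assumes "\<phi> > 0" and "\<mu> > 0" and "q \<le> 1"
    and "(1 - q) * real n1 * \<phi> \<le> q * \<mu> + real n2 * \<phi> + (1 - q) * \<phi>"
  shows "source1_stable n1 n2 \<phi> \<mu> q (\<lambda>_. True) (\<lambda>_. True)"
proof -
  let ?T = "\<lambda>_::nat. True"
  have upd: "?T(i := True) = ?T" for i by (simp add: fun_upd_idem)
  have T1: "traffic1 n1 n2 \<phi> q ?T ?T = real n1 * \<phi>"
    unfolding traffic1_def by (simp add: num_dp_const_True)
  have "loss1 n1 n2 \<phi> \<mu> q ?T ?T i \<le> loss1 n1 n2 \<phi> \<mu> q (?T(i := b)) ?T i" if "i < n1" for i b
  proof (cases b)
    case True
    then show ?thesis by (simp add: upd)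
  next
    case False
    have T2: "traffic2 n1 n2 \<phi> q (?T(i := False)) ?T = real n2 * \<phi> + (1 - q) * \<phi>"
      using traffic2_fun_upd_False[OF that, of n2 \<phi> q ?T ?T, unfolded upd]
      by (simp add: traffic2_def num_dp_const_True)
    have "(1 - q) * (real n1 * \<phi> + \<mu>) \<le> real n2 * \<phi> + (1 - q) * \<phi> + \<mu>"
      using assms(4) by (simp add: algebra_simps)
    then show ?thesis
      using False T1 T2 direct_loss_le_indirect_iff[of \<phi> \<mu> "real n1 * \<phi>" "real n2 * \<phi> + (1 - q) * \<phi>" q] assms
      unfolding loss1_def Let_def by simp
  qed
  then show ?thesis unfolding source1_stable_def by (simp add: not_less)
qed

lemma source1_stable_indirect_user:
  assumes "\<phi> > 0" and "\<mu> > 0" and "q \<le> 1"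
    and "source1_stable n1 n2 \<phi> \<mu> q d1 d2" and "i < n1" and "\<not> d1 i"
  shows "traffic2 n1 n2 \<phi> q d1 d2 + \<mu> \<le> (1 - q) * (traffic1 n1 n2 \<phi> q d1 d2 + \<phi> + \<mu>)"
proof -
  have "d1(i := False) = d1" using assms(6) by (simp add: fun_upd_idem)
  then have T1: "traffic1 n1 n2 \<phi> q (d1(i := True)) d2 = traffic1 n1 n2 \<phi> q d1 d2 + \<phi>"
    using traffic1_fun_upd_True[OF assms(5)] by metis
  have "loss1 n1 n2 \<phi> \<mu> q d1 d2 i \<le> loss1 n1 n2 \<phi> \<mu> q (d1(i := True)) d2 i"
    using assms(4,5) unfolding source1_stable_def by (simp add: not_less)
  then show ?thesis
    using assms(6) T1 indirect_loss_le_direct_iff traffic_nonneg[OF assms(1,3)] assms(1,2)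
    unfolding loss1_def Let_def by simp
qed

lemma source1_stable_all_direct_if_source2_all_direct:
  assumes "\<phi> > 0" and "\<mu> > 0" and "q \<le> 1"
    and "(1 - q) * real n1 * \<phi> < q * \<mu> + real n2 * \<phi> + (1 - q) * \<phi>"
    and "source1_stable n1 n2 \<phi> \<mu> q d1 d2" and "\<forall>j<n2. d2 j"
  shows "\<forall>i<n1. d1 i"
proof (rule ccontr)
  assume "\<not> (\<forall>i<n1. d1 i)"
  then obtain i where i: "i < n1" "\<not> d1 i" by blast
  define u where "u = real (num_dp n1 d1)"
  have "num_dp n1 d1 < n1" using i num_dp_le[of n1 d1] num_dp_eq_iff[of n1 d1] by fastforce
  then have u: "u \<le> real n1 - 1" unfolding u_def by linarith
  have "num_dp n2 d2 = n2" using assms(6) num_dp_eq_iff by blast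
  then have "traffic1 n1 n2 \<phi> q d1 d2 = u * \<phi>"
    and "traffic2 n1 n2 \<phi> q d1 d2 = real n2 * \<phi> + (real n1 - u) * (1 - q) * \<phi>"
    unfolding traffic1_def traffic2_def u_def using num_dp_le[of n1 d1] by (simp_all add: of_nat_diff)
  then have "real n2 * \<phi> + (real n1 - u) * (1 - q) * \<phi> + \<mu> \<le> (1 - q) * (u * \<phi> + \<phi> + \<mu>)"
    using source1_stable_indirect_user[OF assms(1-3,5) i] by simp
  moreover have "u * ((1 - q) * \<phi>) \<le> (real n1 - 1) * ((1 - q) * \<phi>)"
    using u assms(1,3) by (intro mult_right_mono) simp_all
  ultimately show False using assms(4) by (simp add: algebra_simps)
qed

lemma indirect_users_at_most_one_source:
  assumes "\<phi> > 0" and "\<mu> > 0" and "0 \<le> q" and "q \<le> 1" and "q > 2 / real (n1 + n2)"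
    and "source1_stable n1 n2 \<phi> \<mu> q d1 d2" and "source1_stable n2 n1 \<phi> \<mu> q d2 d1"
  shows "(\<forall>i<n1. d1 i) \<or> (\<forall>j<n2. d2 j)"
proof (rule ccontr)
  assume "\<not> ((\<forall>i<n1. d1 i) \<or> (\<forall>j<n2. d2 j))"
  then obtain i j where i: "i < n1" "\<not> d1 i" and j: "j < n2" "\<not> d2 j" by blast
  define T1 where "T1 = traffic1 n1 n2 \<phi> q d1 d2"
  define T2 where "T2 = traffic2 n1 n2 \<phi> q d1 d2"
  have "T2 + \<mu> \<le> (1 - q) * (T1 + \<phi> + \<mu>)"
    unfolding T1_def T2_def using source1_stable_indirect_user[OF assms(1,2,4,6) i] .
  moreover have "T1 + \<mu> \<le> (1 - q) * (T2 + \<phi> + \<mu>)"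
    unfolding T1_def T2_def traffic2_eq_traffic1_swap[of n1 n2]
    using source1_stable_indirect_user[OF assms(1,2,4,7) j, unfolded traffic2_eq_traffic1_swap[of n2 n1]] .
  ultimately have sum: "q * (T1 + T2) + 2 * q * \<mu> \<le> 2 * (1 - q) * \<phi>"
    by (simp add: algebra_simps)
  have "T1 + T2 \<ge> (1 - q) * real (n1 + n2) * \<phi>"
    unfolding T1_def T2_def traffic1_plus_traffic2 using assms(1,3) by simp
  then have "q * ((1 - q) * real (n1 + n2) * \<phi>) \<le> q * (T1 + T2)"
    using assms(3) by (rule mult_left_mono)
  moreover have "2 * ((1 - q) * \<phi>) \<le> (q * real (n1 + n2)) * ((1 - q) * \<phi>)"
  proof (rule mult_right_mono)
    show "2 \<le> q * real (n1 + n2)" using assms(5) i by (simp add: field_simps)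
  qed (use assms(1,4) in simp)
  moreover have "q * \<mu> > 0"
    using assms(2,5) divide_nonneg_nonneg[of 2 "real (n1 + n2)"] by (intro mult_pos_pos) linarith+
  ultimately show False using sum by (simp add: algebra_simps)
qed

theorem corollary4:
  fixes n1 n2 :: nat and \<phi> \<mu> q :: real
  assumes "\<phi> > 0" and "\<mu> > 0" and "0 \<le> q" and "q \<le> 1"
    and "n1 \<ge> n2"
    and "real n1 * (1 - q) < q * \<mu> / \<phi> + real n2 + (1 - q)"
    and "q > 2 / real (n1 + n2)"
  shows "nash_eq n1 n2 \<phi> \<mu> q (\<lambda>_. True) (\<lambda>_. True) \<and>
         (\<forall>d1 d2. nash_eq n1 n2 \<phi> \<mu> q d1 d2 \<longrightarrow> (\<forall>i < n1. d1 i) \<and> (\<forall>i < n2. d2 i))"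
proof -
  have threshold1: "(1 - q) * real n1 * \<phi> < q * \<mu> + real n2 * \<phi> + (1 - q) * \<phi>"
    using mult_strict_right_mono[OF assms(6,1)] assms(1) by (simp add: algebra_simps)
  have "q > 0" using assms(7) divide_nonneg_nonneg[of 2 "real (n1 + n2)"] by linarith
  have "(1 - q) * (real n2 * \<phi>) \<le> real n2 * \<phi>"
    using assms(1,3,4) by (intro mult_left_le_one_le) simp_all
  also have "\<dots> \<le> real n1 * \<phi>" using assms(1,5) by simp
  finally have "(1 - q) * real n2 * \<phi> \<le> real n1 * \<phi>" by (simp only: mult.assoc)
  then have threshold2: "(1 - q) * real n2 * \<phi> < q * \<mu> + real n1 * \<phi> + (1 - q) * \<phi>"
    using mult_pos_pos[OF \<open>q > 0\<close> assms(2)] mult_nonneg_nonneg[of "1 - q" \<phi>] assms(1,4)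
    by linarith
  have "nash_eq n1 n2 \<phi> \<mu> q (\<lambda>_. True) (\<lambda>_. True)"
    unfolding nash_eq_iff_source1_stable using threshold1 threshold2 assms(1,2,4)
    by (simp add: source1_stable_all_direct less_imp_le)
  moreover have "(\<forall>i < n1. d1 i) \<and> (\<forall>i < n2. d2 i)" if "nash_eq n1 n2 \<phi> \<mu> q d1 d2" for d1 d2
    using that indirect_users_at_most_one_source[OF assms(1-4,7)]
      source1_stable_all_direct_if_source2_all_direct[OF assms(1,2,4) threshold1]
      source1_stable_all_direct_if_source2_all_direct[OF assms(1,2,4) threshold2]
    unfolding nash_eq_iff_source1_stable by blast
  ultimately show ?thesis by blast
qed

end
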